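(* In the $\ell^1$ linear social choice setting, on every instance with $n$ voters the uniform projection rule satisfies $\mathbb{E}_{c\sim f_{\mathrm{UProj}}}[\mathrm{UW}(c)]\ge\frac nd$. Consequently $\mathrm{D}(f_{\mathrm{UProj}})=O(d)$.
   Context: Setting ($\ell^1$ linear social choice). Let $\Delta_d=\{x\in\mathbb{R}^d_{\ge 0}:\sum_i x^i=1\}$ (superscripts denote coordinates). An instance consists of $n$ voters and $m$ candidates, each a vector in $\Delta_d$, with every voter vector in $\mathrm{Cone}(C)$ (nonnegative linear combinations of the candidate vectors $C$). Utility $u_v(c)=v^\top c$; voters report consistent rankings; $\mathrm{UW}(c)=\sum_v u_v(c)$. A randomized rule outputs a distribution over $C$ and may use the candidate vectors but not the voter vectors. Distortion on an instance: $\max_c\mathrm{UW}(c)/\mathbb{E}_{c\sim f}[\mathrm{UW}(c)]$; $\mathrm{D}(f)$ is the supremum over instances, as a function of $d$. Uniform projection rule $f_{\mathrm{UProj}}$: with $\mu=(1/d,\dots,1/d)$, output a distribution $(p_c)_{c\in C}$ such that $\hat c=\sum_c p_c c$ minimizes $\mathrm{KL}(\mu\|x)=\sum_{i=1}^d\mu^i\ln(\mu^i/x^i)$ over $x\in\mathrm{CH}(C)$, the convex hull of $C$. *)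

theory Defs
  imports "HOL-Analysis.Analysis"
begin

text \<open>Coordinates are indexed by a finite type 'd; the dimension is d = CARD('d).\<close>

definition in_simplex :: "real ^ 'd \<Rightarrow> bool" where
  "in_simplex x \<longleftrightarrow> (\<forall>i. 0 \<le> x $ i) \<and> (\<Sum>i\<in>UNIV. x $ i) = 1"

definition in_cone :: "(real ^ 'd) set \<Rightarrow> real ^ 'd \<Rightarrow> bool" where
  "in_cone C v \<longleftrightarrow> (\<exists>l. (\<forall>c\<in>C. 0 \<le> l c) \<and> v = (\<Sum>c\<in>C. l c *\<^sub>R c))"

definition util :: "real ^ 'd \<Rightarrow> real ^ 'd \<Rightarrow> real" where
  "util v c = v \<bullet> c"

definition UW :: "nat \<Rightarrow> (nat \<Rightarrow> real ^ 'd) \<Rightarrow> real ^ 'd \<Rightarrow> real" where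
  "UW n V c = (\<Sum>k<n. util (V k) c)"

text \<open>KL(mu || x) with mu uniform; only used for x with strictly positive coordinates
  (otherwise the divergence is +infinity).\<close>
definition KL_unif :: "real ^ 'd \<Rightarrow> real" where
  "KL_unif x = (\<Sum>i\<in>UNIV. (1 / real CARD('d)) * ln ((1 / real CARD('d)) / x $ i))"

text \<open>p is an output of the uniform projection rule on candidate set C:
  p is a distribution over C whose mean minimizes KL(mu || x) over the convex hull of C
  (the minimum being finite, i.e. attained at a point with positive coordinates).\<close>
definition is_UProj :: "(real ^ 'd) set \<Rightarrow> (real ^ 'd \<Rightarrow> real) \<Rightarrow> bool" where
  "is_UProj C p \<longleftrightarrow>
     (\<forall>c\<in>C. 0 \<le> p c) \<and> (\<Sum>c\<in>C. p c) = 1 \<and>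
     (let ch = (\<Sum>c\<in>C. p c *\<^sub>R c) in
        (\<forall>i. 0 < ch $ i) \<and>
        (\<forall>x\<in>convex hull C. (\<forall>i. 0 < x $ i) \<longrightarrow> KL_unif ch \<le> KL_unif x))"

definition expected_UW :: "(real ^ 'd) set \<Rightarrow> (real ^ 'd \<Rightarrow> real) \<Rightarrow> nat \<Rightarrow> (nat \<Rightarrow> real ^ 'd) \<Rightarrow> real" where
  "expected_UW C p n V = (\<Sum>c\<in>C. p c * UW n V c)"

end

theory Submission
  imports Defs
begin

text \<open>Minimising KL(mu || x) over the convex hull of the candidates means maximising
  sum_i ln x_i, so the first-order optimality condition at the mean z of the projection reads
  sum_i x_i / z_i \<le> d for every x in the hull. A voter in the cone of simplex candidates lies
  in the hull itself, and the AM-GM inequality turns the optimality condition into utility at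
  least 1/d for that voter. Summing over the voters gives expected welfare at least n/d, while
  no candidate has welfare above n.\<close>

lemma sum_le_0_if_sum_ln_1_plus_le_0:
  fixes a :: "'i \<Rightarrow> real"
  assumes le_0: "\<And>t. 0 < t \<Longrightarrow> t < 1 \<Longrightarrow> (\<Sum>i\<in>I. ln (1 + t * a i)) \<le> 0"
  shows "(\<Sum>i\<in>I. a i) \<le> 0"
proof (rule ccontr)
  define f where "f t = (\<Sum>i\<in>I. ln (1 + t * a i))" for t
  assume "\<not> (\<Sum>i\<in>I. a i) \<le> 0"
  then have "0 < (\<Sum>i\<in>I. a i)" by simp
  moreover have "(f has_real_derivative (\<Sum>i\<in>I. a i)) (at 0)"
    unfolding f_def by (rule derivative_eq_intros | simp)+
  ultimately obtain e where "e > 0" and inc: "\<forall>h>0. h < e \<longrightarrow> f 0 < f (0 + h)"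
    using DERIV_pos_inc_right by blast
  define h where "h = min (e/2) (1/2)"
  have "f 0 < f h"
    using inc \<open>e > 0\<close> by (simp add: h_def)
  moreover have "f h \<le> 0"
    unfolding f_def using \<open>e > 0\<close> by (intro le_0) (auto simp: h_def)
  ultimately show False by (simp add: f_def)
qed

lemma KL_unif_eq_sum_ln:
  fixes x :: "real ^ 'd"
  assumes "\<And>i. 0 < x $ i"
  shows "KL_unif x = - ln (real CARD('d)) - (\<Sum>i\<in>UNIV. ln (x $ i)) / real CARD('d)"
proof -
  have "ln ((1 / real CARD('d)) / x $ i) = - ln (real CARD('d)) - ln (x $ i)" for i
    using assms[of i] by (simp add: ln_div ln_mult)
  then have "KL_unif x = (\<Sum>i\<in>UNIV. - ln (real CARD('d)) - ln (x $ i)) / real CARD('d)"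
    unfolding KL_unif_def by (simp add: sum_divide_distrib)
  then show ?thesis
    by (simp add: sum_subtractf diff_divide_distrib)
qed

lemma KL_unif_le_iff:
  fixes x y :: "real ^ 'd"
  assumes "\<And>i. 0 < x $ i" and "\<And>i. 0 < y $ i"
  shows "KL_unif x \<le> KL_unif y \<longleftrightarrow> (\<Sum>i\<in>UNIV. ln (y $ i)) \<le> (\<Sum>i\<in>UNIV. ln (x $ i))"
  using assms by (simp add: KL_unif_eq_sum_ln divide_le_cancel)

lemma sum_divide_le_card_if_KL_unif_minimal:
  fixes S :: "(real ^ 'd) set"
  assumes "convex S" and "z \<in> S" and z_pos: "\<And>i. 0 < z $ i"
    and minimal: "\<forall>y\<in>S. (\<forall>i. 0 < y $ i) \<longrightarrow> KL_unif z \<le> KL_unif y"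
    and "x \<in> S" and x_nonneg: "\<And>i. 0 \<le> x $ i"
  shows "(\<Sum>i\<in>UNIV. x $ i / z $ i) \<le> real CARD('d)"
proof -
  define a where "a i = x $ i / z $ i - 1" for i
  have ln_le_0: "(\<Sum>i\<in>UNIV. ln (1 + t * a i)) \<le> 0" if "0 < t" "t < 1" for t
  proof -
    define y where "y = (1 - t) *\<^sub>R z + t *\<^sub>R x"
    have y_eq: "y $ i = z $ i * (1 + t * a i)" for i
      using z_pos[of i] by (simp add: y_def a_def field_simps)
    have factor_pos: "0 < 1 + t * a i" for i
    proof -
      have "0 \<le> t * (x $ i / z $ i)"
        using that x_nonneg[of i] z_pos[of i] by simp
      then show ?thesis using that by (simp add: a_def algebra_simps)
    qed
    have y_pos: "0 < y $ i" for i
      using y_eq factor_pos z_pos by simp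
    have "y \<in> S"
      unfolding y_def using that assms(1,2,5) by (intro convexD) auto
    then have "(\<Sum>i\<in>UNIV. ln (y $ i)) \<le> (\<Sum>i\<in>UNIV. ln (z $ i))"
      using minimal y_pos z_pos KL_unif_le_iff by blast
    moreover have "ln (y $ i) = ln (z $ i) + ln (1 + t * a i)" for i
      using z_pos[of i] factor_pos[of i] by (simp add: y_eq ln_mult)
    then have "(\<Sum>i\<in>UNIV. ln (y $ i)) = (\<Sum>i\<in>UNIV. ln (z $ i)) + (\<Sum>i\<in>UNIV. ln (1 + t * a i))"
      by (simp add: sum.distrib)
    ultimately show ?thesis by simp
  qed
  have "(\<Sum>i\<in>UNIV. a i) \<le> 0"
    using ln_le_0 by (rule sum_le_0_if_sum_ln_1_plus_le_0)
  then show ?thesis by (simp add: a_def sum_subtractf)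
qed

lemma sum_mult_ge_inverse_if_sum_divide_le:
  fixes w c :: "'i \<Rightarrow> real"
  assumes "finite I" and w_nonneg: "\<forall>i\<in>I. 0 \<le> w i" and "(\<Sum>i\<in>I. w i) = 1"
    and c_pos: "\<forall>i\<in>I. 0 < c i" and "D > 0" and "(\<Sum>i\<in>I. w i / c i) \<le> D"
  shows "1 / D \<le> (\<Sum>i\<in>I. w i * c i)"
proof -
  have am_gm: "2 * w i \<le> D * (w i * c i) + w i / c i / D" if "i \<in> I" for i
  proof -
    have "0 \<le> w i" and "0 < c i"
      using that w_nonneg c_pos by auto
    then have "0 \<le> w i * (D * c i - 1)\<^sup>2 / (D * c i)"
      using \<open>D > 0\<close> by simp
    also have "\<dots> = D * (w i * c i) + w i / c i / D - 2 * w i"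
      using \<open>0 < c i\<close> \<open>D > 0\<close> by (simp add: field_simps power2_eq_square)
    finally show ?thesis by simp
  qed
  have "2 = (\<Sum>i\<in>I. 2 * w i)"
    using assms(3) by (simp flip: sum_distrib_left)
  also have "\<dots> \<le> (\<Sum>i\<in>I. D * (w i * c i) + w i / c i / D)"
    using am_gm by (rule sum_mono)
  also have "\<dots> = D * (\<Sum>i\<in>I. w i * c i) + (\<Sum>i\<in>I. w i / c i) / D"
    by (simp add: sum.distrib sum_distrib_left sum_divide_distrib)
  also have "(\<Sum>i\<in>I. w i / c i) / D \<le> 1"
    using assms(5,6) by simp
  finally show ?thesis
    using \<open>D > 0\<close> by (simp add: field_simps)
qed

lemma in_convex_hull_if_in_cone_in_simplex:
  fixes C :: "(real ^ 'd) set"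
  assumes "finite C" and C_simplex: "\<forall>c\<in>C. in_simplex c"
    and "in_cone C v" and "in_simplex v"
  shows "v \<in> convex hull C"
proof -
  obtain l where l_nonneg: "\<forall>c\<in>C. 0 \<le> l c" and v_eq: "v = (\<Sum>c\<in>C. l c *\<^sub>R c)"
    using \<open>in_cone C v\<close> unfolding in_cone_def by blast
  have "1 = (\<Sum>i\<in>UNIV. v $ i)"
    using \<open>in_simplex v\<close> by (simp add: in_simplex_def)
  also have "\<dots> = (\<Sum>c\<in>C. l c * (\<Sum>i\<in>UNIV. c $ i))"
    by (simp add: v_eq sum_distrib_left) (rule sum.swap)
  also have "\<dots> = (\<Sum>c\<in>C. l c)"
    using C_simplex by (intro sum.cong) (auto simp: in_simplex_def)
  finally show ?thesis
    unfolding convex_hull_finite[OF \<open>finite C\<close>] using l_nonneg v_eq by auto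
qed

lemma UProj_inner_mean_ge:
  fixes C :: "(real ^ 'd) set"
  assumes "finite C" and "\<forall>c\<in>C. in_simplex c" and "is_UProj C p"
    and "in_simplex v" and "in_cone C v"
  shows "1 / real CARD('d) \<le> v \<bullet> (\<Sum>c\<in>C. p c *\<^sub>R c)"
proof -
  define z where "z = (\<Sum>c\<in>C. p c *\<^sub>R c)"
  have "\<forall>c\<in>C. 0 \<le> p c" and "(\<Sum>c\<in>C. p c) = 1"
    and z_pos: "\<forall>i. 0 < z $ i"
    and minimal: "\<forall>y\<in>convex hull C. (\<forall>i. 0 < y $ i) \<longrightarrow> KL_unif z \<le> KL_unif y"
    using \<open>is_UProj C p\<close> unfolding is_UProj_def Let_def z_def by auto
  then have "z \<in> convex hull C"
    unfolding convex_hull_finite[OF \<open>finite C\<close>] z_def by blast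
  moreover have "v \<in> convex hull C"
    using assms by (intro in_convex_hull_if_in_cone_in_simplex)
  ultimately have "(\<Sum>i\<in>UNIV. v $ i / z $ i) \<le> real CARD('d)"
    using z_pos minimal \<open>in_simplex v\<close>
    by (intro sum_divide_le_card_if_KL_unif_minimal) (auto simp: in_simplex_def)
  then have "1 / real CARD('d) \<le> (\<Sum>i\<in>UNIV. v $ i * z $ i)"
    using z_pos \<open>in_simplex v\<close>
    by (intro sum_mult_ge_inverse_if_sum_divide_le) (auto simp: in_simplex_def)
  then show ?thesis by (simp add: z_def inner_vec_def)
qed

lemma inner_le_1_if_in_simplex:
  fixes v c :: "real ^ 'd"
  assumes "in_simplex v" and "in_simplex c"
  shows "v \<bullet> c \<le> 1"
proof -
  have c_le_1: "c $ i \<le> 1" for i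
  proof -
    have "c $ i \<le> (\<Sum>j\<in>UNIV. c $ j)"
      using assms(2) by (intro member_le_sum) (auto simp: in_simplex_def)
    then show ?thesis using assms(2) by (simp add: in_simplex_def)
  qed
  have "v \<bullet> c = (\<Sum>i\<in>UNIV. v $ i * c $ i)" by (simp add: inner_vec_def)
  also have "\<dots> \<le> (\<Sum>i\<in>UNIV. v $ i)"
    using assms(1) c_le_1 by (intro sum_mono) (auto simp: in_simplex_def intro: mult_left_le)
  also have "\<dots> = 1" using assms(1) by (simp add: in_simplex_def)
  finally show ?thesis .
qed

lemma UW_le_num_voters:
  assumes "\<forall>k<n. in_simplex (V k)" and "in_simplex c"
  shows "UW n V c \<le> real n"
proof -
  have "(\<Sum>k<n. util (V k) c) \<le> (\<Sum>k<n. 1)"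
    using assms by (intro sum_mono) (simp add: util_def inner_le_1_if_in_simplex)
  then show ?thesis by (simp add: UW_def)
qed

lemma expected_UW_eq_sum_inner_mean:
  "expected_UW C p n V = (\<Sum>k<n. V k \<bullet> (\<Sum>c\<in>C. p c *\<^sub>R c))"
  unfolding expected_UW_def UW_def util_def
  by (simp add: inner_sum_right sum_distrib_left) (rule sum.swap)

theorem theorem5:
  fixes C :: "(real ^ 'd) set" and V :: "nat \<Rightarrow> real ^ 'd" and n :: nat
    and p :: "real ^ 'd \<Rightarrow> real"
  assumes "finite C" and "C \<noteq> {}"
    and "\<forall>c\<in>C. in_simplex c"
    and "\<forall>k<n. in_simplex (V k) \<and> in_cone C (V k)"
    and "is_UProj C p"
  shows "expected_UW C p n V \<ge> real n / real CARD('d)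
         \<and> (MAX c\<in>C. UW n V c) \<le> real CARD('d) * expected_UW C p n V"
proof -
  have "(\<Sum>k<n. 1 / real CARD('d)) \<le> (\<Sum>k<n. V k \<bullet> (\<Sum>c\<in>C. p c *\<^sub>R c))"
    using assms(1,3-5) by (intro sum_mono UProj_inner_mean_ge) auto
  then have lower: "real n / real CARD('d) \<le> expected_UW C p n V"
    by (simp add: expected_UW_eq_sum_inner_mean)
  have "(MAX c\<in>C. UW n V c) \<le> real n"
    using assms(1-4) by (simp add: UW_le_num_voters)
  also have "\<dots> \<le> real CARD('d) * expected_UW C p n V"
    using lower by (simp add: field_simps)
  finally show ?thesis
    using lower by simp
qed

end
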